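(* Let $\alpha \vDash n$ be a strong composition with $\ell(\alpha) = r$, and let $\overline{\alpha}$ have length $s$. Write $\{1 \leq j \leq r : \alpha_j > 1\} = \{j_1, \ldots, j_s\}$. Then \[ \deg(\alpha) = \deg(\overline{\alpha}) + \binom{r}{2} - s + j_1 + \cdots + j_s. \]
   Context: A strong composition $\alpha = (\alpha_1, \ldots, \alpha_r)$ of $n$ is a sequence of positive integers summing to $n$, with length $\ell(\alpha) = r$. $\operatorname{coinv}(\alpha) = \#\{1 \leq i < j \leq \ell(\alpha) : \alpha_i < \alpha_j\}$. Let $\mu(\alpha)$ be the weakly decreasing rearrangement of $\alpha$. Define $\deg(\alpha) = \operatorname{coinv}(\alpha) + \sum_{i=1}^{\ell(\alpha)} (i-1)(2\mu(\alpha)_i - 1)$. $\overline{\alpha}$ is the strong composition obtained by subtracting $1$ from every entry of $\alpha$ and deleting the resulting zeros (the empty composition has $\deg = 0$). *)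

theory Defs
  imports Main
begin

text \<open>Strong compositions are lists of positive naturals; entries indexed 1..length
  (list index i-1 holds alpha_i).\<close>

definition strong_comp :: "nat list \<Rightarrow> nat \<Rightarrow> bool" where
  "strong_comp \<alpha> n \<longleftrightarrow> (\<forall>x\<in>set \<alpha>. 0 < x) \<and> sum_list \<alpha> = n"

definition coinv :: "nat list \<Rightarrow> nat" where
  "coinv \<alpha> = card {(i, j). 1 \<le> i \<and> i < j \<and> j \<le> length \<alpha> \<and> \<alpha> ! (i - 1) < \<alpha> ! (j - 1)}"

definition mu :: "nat list \<Rightarrow> nat list" where
  "mu \<alpha> = rev (sort \<alpha>)"

definition deg :: "nat list \<Rightarrow> int" where
  "deg \<alpha> = int (coinv \<alpha>)
     + (\<Sum>i = 1..length \<alpha>. (int i - 1) * (2 * int (mu \<alpha> ! (i - 1)) - 1))"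

definition bar :: "nat list \<Rightarrow> nat list" where
  "bar \<alpha> = filter (\<lambda>x. x \<noteq> 0) (map (\<lambda>x. x - 1) \<alpha>)"

end

theory Submission
  imports Defs "HOL-Library.Multiset"
begin

text \<open>
  Write \<open>deg \<alpha> = coinv \<alpha> + W (mu \<alpha>)\<close> with \<open>W m = \<Sum>i<length m. i (2 m\<^sub>i - 1)\<close>.
  As all entries of \<open>\<alpha>\<close> are positive, \<open>mu \<alpha>\<close> is \<open>mu (bar \<alpha>)\<close> with every entry raised
  by one, followed by \<open>r - s\<close> ones; raising the entries adds \<open>2 (s choose 2)\<close> to \<open>W\<close> and
  the trailing ones add \<open>(r choose 2) - (s choose 2)\<close>.  For the coinversions, build \<open>\<alpha>\<close>
  from left to right: an entry \<open>x > 1\<close> appended at position \<open>j\<close> forms coinversions with the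
  earlier entries \<open>y\<close> with \<open>1 < y < x\<close>, as \<open>x - 1\<close> does in \<open>bar \<alpha>\<close>, and with the earlier
  ones, of which there are \<open>j - 1 - t\<close> if it is the \<open>(t+1)\<close>-st entry greater than one.
  Summing \<open>j - 1 - t\<close> over \<open>t < s\<close> gives \<open>j\<^sub>1 + \<dots> + j\<^sub>s - s - (s choose 2)\<close>.
\<close>

lemma sum_lessThan_eq_choose_two: "(\<Sum>i<n. i) = n choose 2"
  by (induction n) (simp_all add: numeral_2_eq_2)

lemma Suc_choose_two: "Suc n choose 2 = (n choose 2) + n"
  using sum_lessThan_eq_choose_two[of n] sum_lessThan_eq_choose_two[of "Suc n"] by simp

lemma bar_Nil [simp]: "bar [] = []"
  by (simp add: bar_def)

lemma bar_Cons: "bar (x # xs) = (if 1 < x then (x - 1) # bar xs else bar xs)"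
  by (auto simp: bar_def)

lemma bar_snoc: "bar (xs @ [x]) = (if 1 < x then bar xs @ [x - 1] else bar xs)"
  by (auto simp: bar_def)

lemma length_eq_count_one_plus_length_bar:
  "0 \<notin> set xs \<Longrightarrow> length xs = count_list xs 1 + length (bar xs)"
  by (induction xs) (auto simp: bar_Cons)

lemma mset_eq_ones_plus_Suc_bar:
  "0 \<notin> set xs \<Longrightarrow> mset xs = replicate_mset (count_list xs 1) 1 + mset (map Suc (bar xs))"
  by (induction xs) (auto simp: bar_Cons)

lemma sort_eq_ones_append_Suc_bar:
  assumes "0 \<notin> set xs"
  shows "sort xs = replicate (count_list xs 1) 1 @ map Suc (sort (bar xs))"
  by (rule properties_for_sort)
    (simp_all add: mset_eq_ones_plus_Suc_bar[OF assms] sorted_append sorted_map)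

lemma mu_eq_Suc_mu_bar_append_ones:
  assumes "0 \<notin> set xs"
  shows "mu xs = map Suc (mu (bar xs)) @ replicate (length xs - length (bar xs)) 1"
  using sort_eq_ones_append_Suc_bar[OF assms] length_eq_count_one_plus_length_bar[OF assms]
  by (simp add: mu_def rev_map)

lemma length_mu [simp]: "length (mu xs) = length xs"
  by (simp add: mu_def)

definition weighted_index_sum :: "nat list \<Rightarrow> int" where
  "weighted_index_sum m = (\<Sum>i<length m. int i * (2 * int (m ! i) - 1))"

lemma deg_eq_coinv_plus_weighted_index_sum:
  "deg xs = int (coinv xs) + weighted_index_sum (mu xs)"
proof -
  have "(\<Sum>i = 1..length xs. (int i - 1) * (2 * int (mu xs ! (i - 1)) - 1))
      = (\<Sum>i<length xs. int i * (2 * int (mu xs ! i) - 1))"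
    unfolding One_nat_def sum.atLeast1_atMost_eq by simp
  then show ?thesis
    by (simp add: deg_def weighted_index_sum_def mu_def)
qed

lemma weighted_index_sum_snoc_one:
  "weighted_index_sum (xs @ [1]) = weighted_index_sum xs + int (length xs)"
  by (simp add: weighted_index_sum_def nth_append)

lemma weighted_index_sum_append_ones:
  "weighted_index_sum (xs @ replicate k 1)
     = weighted_index_sum xs + int ((length xs + k) choose 2) - int (length xs choose 2)"
proof (induction k)
  case (Suc k)
  have "xs @ replicate (Suc k) 1 = (xs @ replicate k 1) @ [1]"
    by (simp add: replicate_append_same)
  then show ?case
    using Suc weighted_index_sum_snoc_one[of "xs @ replicate k 1"] Suc_choose_two[of "length xs + k"]
    by simp
qed simp

lemma weighted_index_sum_map_Suc:
  "weighted_index_sum (map Suc m) = weighted_index_sum m + 2 * int (length m choose 2)"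
proof -
  have "weighted_index_sum (map Suc m)
      = (\<Sum>i<length m. int i * (2 * int (m ! i) - 1) + 2 * int i)"
    unfolding weighted_index_sum_def by (rule sum.cong) (auto simp: algebra_simps)
  also have "\<dots> = weighted_index_sum m + 2 * int (\<Sum>i<length m. i)"
    by (simp add: sum.distrib weighted_index_sum_def sum_distrib_left)
  finally show ?thesis
    by (simp add: sum_lessThan_eq_choose_two)
qed

lemma coinv_snoc: "coinv (xs @ [x]) = coinv xs + length (filter (\<lambda>y. y < x) xs)"
proof -
  let ?P = "\<lambda>l. {(i, j). 1 \<le> i \<and> i < j \<and> j \<le> length l \<and> l ! (i - 1) < l ! (j - 1)}"
  let ?I = "{i. 1 \<le> i \<and> i \<le> length xs \<and> xs ! (i - 1) < x}"
  have split: "?P (xs @ [x]) = ?P xs \<union> (\<lambda>i. (i, Suc (length xs))) ` ?I"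
    by (auto simp: nth_append le_Suc_eq split: if_splits)
  have "finite (?P xs)"
    by (rule finite_subset[of _ "{0..length xs} \<times> {0..length xs}"]) auto
  moreover have "?I = Suc ` {i. i < length xs \<and> xs ! i < x}"
  proof (intro set_eqI iffI)
    fix i assume "i \<in> ?I"
    then show "i \<in> Suc ` {i. i < length xs \<and> xs ! i < x}"
      by (auto simp: image_iff intro!: exI[of _ "i - 1"])
  qed auto
  ultimately show ?thesis
    unfolding coinv_def split
    by (subst card_Un_disjoint) (auto simp: card_image inj_on_def length_filter_conv_card)
qed

lemma length_filter_less_eq_ones_plus_bar:
  "0 \<notin> set xs \<Longrightarrow> 1 < x \<Longrightarrow>
   length (filter (\<lambda>y. y < x) xs) = count_list xs 1 + length (filter (\<lambda>y. y < x - 1) (bar xs))"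
  by (induction xs) (auto simp: bar_Cons)

lemma coinv_bar:
  assumes "0 \<notin> set xs"
  shows "int (coinv xs) + int (length (bar xs) choose 2) + int (length (bar xs))
       = int (coinv (bar xs)) + int (\<Sum>j | 1 \<le> j \<and> j \<le> length xs \<and> 1 < xs ! (j - 1). j)"
  using assms
proof (induction xs rule: rev_induct)
  case Nil
  then show ?case by (simp add: coinv_def)
next
  case (snoc x xs)
  let ?J = "\<lambda>xs. {j. 1 \<le> j \<and> j \<le> length xs \<and> 1 < xs ! (j - 1)}"
  have xs: "0 \<notin> set xs" and "0 < x" using snoc.prems by auto
  have "?J (xs @ [x]) = ?J xs \<union> (if 1 < x then {Suc (length xs)} else {})"
    by (auto simp: nth_append le_Suc_eq split: if_splits)
  moreover have "finite (?J xs)"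
    by (rule finite_subset[of _ "{0..length xs}"]) auto
  ultimately have sum_J_snoc:
    "(\<Sum>j\<in>?J (xs @ [x]). j) = (\<Sum>j\<in>?J xs. j) + (if 1 < x then Suc (length xs) else 0)"
    by (simp split: if_splits)
  show ?case
  proof (cases "1 < x")
    case True
    then show ?thesis
      using snoc.IH[OF xs] sum_J_snoc length_eq_count_one_plus_length_bar[OF xs]
        length_filter_less_eq_ones_plus_bar[OF xs True] Suc_choose_two[of "length (bar xs)"]
      by (simp add: bar_snoc coinv_snoc)
  next
    case False
    with \<open>0 < x\<close> have "x = 1" by simp
    have "filter (\<lambda>y. y < 1) xs = []"
      using xs by (metis filter_False gr0I less_one)
    then show ?thesis
      using snoc.IH[OF xs] sum_J_snoc \<open>x = 1\<close> by (simp add: bar_snoc coinv_snoc)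
  qed
qed

theorem lemma3p3:
  fixes \<alpha> :: "nat list" and n :: nat
  assumes "strong_comp \<alpha> n"
  shows "deg \<alpha> = deg (bar \<alpha>) + int (length \<alpha> choose 2) - int (length (bar \<alpha>))
           + int (\<Sum>j \<in> {j. 1 \<le> j \<and> j \<le> length \<alpha> \<and> \<alpha> ! (j - 1) > 1}. j)"
proof -
  have pos: "0 \<notin> set \<alpha>"
    using assms by (auto simp: strong_comp_def)
  have "length (bar \<alpha>) \<le> length \<alpha>"
    using length_eq_count_one_plus_length_bar[OF pos] by simp
  then have "weighted_index_sum (mu \<alpha>)
      = weighted_index_sum (mu (bar \<alpha>)) + int (length \<alpha> choose 2) + int (length (bar \<alpha>) choose 2)"
    using weighted_index_sum_append_ones[of "map Suc (mu (bar \<alpha>))" "length \<alpha> - length (bar \<alpha>)"]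
    by (simp add: mu_eq_Suc_mu_bar_append_ones[OF pos] weighted_index_sum_map_Suc)
  then show ?thesis
    using coinv_bar[OF pos]
    by (simp add: deg_eq_coinv_plus_weighted_index_sum)
qed

end
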